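(* Let $N>2$ be an integer, $K,L\in\mathbb{N}$ and $\sigma\in\Omega$. If $u\in\Psi^{K\times L}_{\mathrm{ver}}(\sigma)$ and $v\in\Psi^{K\times L}_{\mathrm{hor}}(\sigma)$ then $\|u-v\|_1\neq1$ (i.e. $u,v$ are not nearest neighbours in $\mathbb{Z}^2$).
   Context: Tiles: $T_{(x,y)}=[x-1,x+1]\times[y-1,y+1]$; $\Omega=\{\sigma\in\{0,1\}^{\mathbb{Z}^2}: \sigma(u)=\sigma(v)=1,u\ne v\Rightarrow\mathrm{int}(T_u)\cap\mathrm{int}(T_v)=\emptyset\}$; parity of the tile centered at $(x,y)$ is $(x-1\bmod2,y-1\bmod2)$. Faces are unit squares with integer corners. A stick edge is an edge of the nearest-neighbour lattice $\mathbb{Z}^2$ separating two faces contained in two tiles of distinct parities; a stick is a maximal path of stick edges (a vertical or horizontal segment). A stick has type $(\mathrm{ver},i)$ if it is vertical and lies on a line $x=x_1$ with $x_1\equiv i\pmod 2$, and type $(\mathrm{hor},i)$ if horizontal on a line $y=y_1$, $y_1\equiv i\pmod 2$. $R_{K\times L,(x,y)}=[x,x+K]\times[y,y+L]$. A vertical segment from $(x_1,y_1)$ to $(x_1,y_2)$, $y_1<y_2$, divides $R_{K\times L,(x,y)}$ if $y_1\le y$, $y+L\le y_2$, $x<x_1<x+K$; horizontal analogously. For a rectangle $R$ with dimensions divisible by $N$, $R^-$ is the rectangle with the same center and dimensions $\frac{N-2}{N}(\mathrm{Width}R,\mathrm{Height}R)$; a stick divides $R$ properly if it divides both $R$ and $R^-$.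 For $\pi$ a type, $\Psi^{K\times L}_\pi(\sigma)=\{(x,y)\in\mathbb{Z}^2: R_{KN\times LN,(xK,yL)}\text{ is properly divided by a stick of type }\pi\}$; $\Psi^{K\times L}_{\mathrm{ver}}=\Psi^{K\times L}_{(\mathrm{ver},0)}\cup\Psi^{K\times L}_{(\mathrm{ver},1)}$, $\Psi^{K\times L}_{\mathrm{hor}}=\Psi^{K\times L}_{(\mathrm{hor},0)}\cup\Psi^{K\times L}_{(\mathrm{hor},1)}$. *)

theory Defs
  imports "HOL-Analysis.Analysis"
begin

type_synonym config = "int \<times> int \<Rightarrow> bool"

definition tile :: "int \<times> int \<Rightarrow> (real \<times> real) set" where
  "tile u = cbox (real_of_int (fst u) - 1, real_of_int (snd u) - 1)
                 (real_of_int (fst u) + 1, real_of_int (snd u) + 1)"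

definition in_Omega :: "config \<Rightarrow> bool" where
  "in_Omega \<sigma> \<longleftrightarrow> (\<forall>u v. \<sigma> u \<and> \<sigma> v \<and> u \<noteq> v \<longrightarrow>
      interior (tile u) \<inter> interior (tile v) = {})"

definition parity :: "int \<times> int \<Rightarrow> int \<times> int" where
  "parity u = ((fst u - 1) mod 2, (snd u - 1) mod 2)"

definition face :: "int \<times> int \<Rightarrow> (real \<times> real) set" where
  "face f = cbox (real_of_int (fst f), real_of_int (snd f))
                 (real_of_int (fst f) + 1, real_of_int (snd f) + 1)"

definition separates_stick :: "config \<Rightarrow> int \<times> int \<Rightarrow> int \<times> int \<Rightarrow> bool" where
  "separates_stick \<sigma> f g \<longleftrightarrow> (\<exists>u v. \<sigma> u \<and> \<sigma> v \<and> face f \<subseteq> tile u \<and> face g \<subseteq> tile v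
      \<and> parity u \<noteq> parity v)"

datatype orient = Ver | Hor

text \<open>Edge number j on the line with coordinate c:
  Ver: the edge from (c,j) to (c,j+1), separating faces (c-1,j) and (c,j);
  Hor: the edge from (j,c) to (j+1,c), separating faces (j,c-1) and (j,c).\<close>
definition stick_edge :: "config \<Rightarrow> orient \<Rightarrow> int \<Rightarrow> int \<Rightarrow> bool" where
  "stick_edge \<sigma> d c j = (case d of
      Ver \<Rightarrow> separates_stick \<sigma> (c - 1, j) (c, j)
    | Hor \<Rightarrow> separates_stick \<sigma> (j, c - 1) (j, c))"

definition int_interval :: "int set \<Rightarrow> bool" where
  "int_interval I \<longleftrightarrow> (\<forall>a\<in>I. \<forall>b\<in>I. \<forall>k. a \<le> k \<and> k \<le> b \<longrightarrow> k \<in> I)"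

text \<open>A stick: a maximal straight path of stick edges, given by its orientation d,
  the coordinate c of its line, and the (nonempty, contiguous) set I of edge indices.\<close>
definition is_stick :: "config \<Rightarrow> orient \<Rightarrow> int \<Rightarrow> int set \<Rightarrow> bool" where
  "is_stick \<sigma> d c I \<longleftrightarrow> I \<noteq> {} \<and> int_interval I \<and> (\<forall>j\<in>I. stick_edge \<sigma> d c j) \<and>
     (\<forall>J. int_interval J \<and> I \<subseteq> J \<and> (\<forall>j\<in>J. stick_edge \<sigma> d c j) \<longrightarrow> J = I)"

definition seg :: "int set \<Rightarrow> real set" where
  "seg I = (\<Union>j\<in>I. {real_of_int j .. real_of_int j + 1})"

definition divides :: "orient \<Rightarrow> int \<Rightarrow> int set \<Rightarrow> int \<times> int \<Rightarrow> int \<Rightarrow> int \<Rightarrow> bool" where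
  "divides d c I p W H = (case d of
      Ver \<Rightarrow> fst p < c \<and> c < fst p + W \<and>
             {real_of_int (snd p) .. real_of_int (snd p + H)} \<subseteq> seg I
    | Hor \<Rightarrow> snd p < c \<and> c < snd p + H \<and>
             {real_of_int (fst p) .. real_of_int (fst p + W)} \<subseteq> seg I)"

text \<open>Proper division of [x,x+W] x [y,y+H] (W,H divisible by N): divides the rectangle and
  R^-, which has the same centre and dimensions (N-2)/N (W,H).\<close>
definition properly_divides :: "nat \<Rightarrow> orient \<Rightarrow> int \<Rightarrow> int set \<Rightarrow> int \<times> int \<Rightarrow> int \<Rightarrow> int \<Rightarrow> bool" where
  "properly_divides N d c I p W H \<longleftrightarrow> divides d c I p W H \<and>
     divides d c I (fst p + W div int N, snd p + H div int N)
       (W - 2 * (W div int N)) (H - 2 * (H div int N))"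

definition Psi :: "nat \<Rightarrow> nat \<Rightarrow> nat \<Rightarrow> orient \<times> int \<Rightarrow> config \<Rightarrow> (int \<times> int) set" where
  "Psi N K L \<pi> \<sigma> = {(x, y). \<exists>c I. is_stick \<sigma> (fst \<pi>) c I \<and> c mod 2 = snd \<pi> \<and>
      properly_divides N (fst \<pi>) c I (x * int K, y * int L) (int K * int N) (int L * int N)}"

definition Psi_ver :: "nat \<Rightarrow> nat \<Rightarrow> nat \<Rightarrow> config \<Rightarrow> (int \<times> int) set" where
  "Psi_ver N K L \<sigma> = Psi N K L (Ver, 0) \<sigma> \<union> Psi N K L (Ver, 1) \<sigma>"

definition Psi_hor :: "nat \<Rightarrow> nat \<Rightarrow> nat \<Rightarrow> config \<Rightarrow> (int \<times> int) set" where
  "Psi_hor N K L \<sigma> = Psi N K L (Hor, 0) \<sigma> \<union> Psi N K L (Hor, 1) \<sigma>"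

end

theory Submission
  imports Defs
begin

text \<open>If the rectangles of neighbouring cells u and v are properly divided by a vertical stick
  and a horizontal stick, then, because proper division keeps a margin of one cell width from
  the sides, the two sticks cross at an interior lattice point (c, c'). No three stick edges can
  meet there as a T: the occupied tiles covering the two faces below (c, c') are distinct (their
  parities differ), so they are centred at (c - 1, c' - 1) and (c + 1, c' - 1); the two horizontal
  stick edges pin down these second coordinates. Centres two apart in one coordinate have the
  same parity, a contradiction.\<close>

lemma face_subset_tile_iff:
  "face f \<subseteq> tile u \<longleftrightarrow>
     fst u - 1 \<le> fst f \<and> fst f \<le> fst u \<and> snd u - 1 \<le> snd f \<and> snd f \<le> snd u"
  unfolding face_def tile_def cbox_Pair_eq cbox_interval times_subset_iff atLeastatMost_subset_iff
  by simp linarith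

lemma occupied_tile_covering_face_unique:
  assumes "in_Omega \<sigma>" "\<sigma> u" "\<sigma> v" "face f \<subseteq> tile u" "face f \<subseteq> tile v"
  shows "u = v"
proof -
  have "interior (face f) \<noteq> {}"
    unfolding face_def interior_cbox by (simp add: box_ne_empty Basis_prod_def)
  moreover have "interior (face f) \<subseteq> interior (tile u) \<inter> interior (tile v)"
    using assms(4,5) by (simp add: interior_mono)
  ultimately show ?thesis
    using assms(1-3) unfolding in_Omega_def by blast
qed

lemma stick_edge_VerE:
  assumes "in_Omega \<sigma>" "stick_edge \<sigma> Ver c j"
  obtains a b where "\<sigma> a" "\<sigma> b" "face (c - 1, j) \<subseteq> tile a" "face (c, j) \<subseteq> tile b"
    "parity a \<noteq> parity b" "fst a = c - 1" "fst b = c + 1"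
proof -
  from assms(2) obtain a b where occ: "\<sigma> a" "\<sigma> b"
    and cov: "face (c - 1, j) \<subseteq> tile a" "face (c, j) \<subseteq> tile b"
    and par: "parity a \<noteq> parity b"
    unfolding stick_edge_def separates_stick_def by auto
  have "a \<noteq> b" using par by auto
  have "fst a \<noteq> c"
    using occupied_tile_covering_face_unique[OF assms(1) occ _ cov(2)] cov(1) \<open>a \<noteq> b\<close>
    by (auto simp: face_subset_tile_iff)
  moreover have "fst b \<noteq> c"
    using occupied_tile_covering_face_unique[OF assms(1) occ cov(1)] cov(2) \<open>a \<noteq> b\<close>
    by (auto simp: face_subset_tile_iff)
  ultimately show ?thesis
    using that[OF occ cov par] cov by (simp add: face_subset_tile_iff)
qed

lemma stick_edge_HorE:
  assumes "in_Omega \<sigma>" "stick_edge \<sigma> Hor c j"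
  obtains a b where "\<sigma> a" "\<sigma> b" "face (j, c - 1) \<subseteq> tile a" "face (j, c) \<subseteq> tile b"
    "parity a \<noteq> parity b" "snd a = c - 1" "snd b = c + 1"
proof -
  from assms(2) obtain a b where occ: "\<sigma> a" "\<sigma> b"
    and cov: "face (j, c - 1) \<subseteq> tile a" "face (j, c) \<subseteq> tile b"
    and par: "parity a \<noteq> parity b"
    unfolding stick_edge_def separates_stick_def by auto
  have "a \<noteq> b" using par by auto
  have "snd a \<noteq> c"
    using occupied_tile_covering_face_unique[OF assms(1) occ _ cov(2)] cov(1) \<open>a \<noteq> b\<close>
    by (auto simp: face_subset_tile_iff)
  moreover have "snd b \<noteq> c"
    using occupied_tile_covering_face_unique[OF assms(1) occ cov(1)] cov(2) \<open>a \<noteq> b\<close>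
    by (auto simp: face_subset_tile_iff)
  ultimately show ?thesis
    using that[OF occ cov par] cov by (simp add: face_subset_tile_iff)
qed

lemma no_stick_T_junction:
  assumes om: "in_Omega \<sigma>"
    and "stick_edge \<sigma> Ver c (c' - 1)"
    and "stick_edge \<sigma> Hor c' (c - 1)" and "stick_edge \<sigma> Hor c' c"
  shows False
proof -
  obtain a b where occ: "\<sigma> a" "\<sigma> b"
    and cov: "face (c - 1, c' - 1) \<subseteq> tile a" "face (c, c' - 1) \<subseteq> tile b"
    and par: "parity a \<noteq> parity b" and fst_ab: "fst a = c - 1" "fst b = c + 1"
    by (rule stick_edge_VerE[OF om assms(2)])
  obtain a' where "\<sigma> a'" "face (c - 1, c' - 1) \<subseteq> tile a'" "snd a' = c' - 1"
    by (rule stick_edge_HorE[OF om assms(3)])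
  moreover from this have "a' = a"
    using occupied_tile_covering_face_unique[OF om _ occ(1) _ cov(1)] by blast
  ultimately have snd_a: "snd a = c' - 1" by simp
  obtain b' where "\<sigma> b'" "face (c, c' - 1) \<subseteq> tile b'" "snd b' = c' - 1"
    by (rule stick_edge_HorE[OF om assms(4)])
  moreover from this have "b' = b"
    using occupied_tile_covering_face_unique[OF om _ occ(2) _ cov(2)] by blast
  ultimately have snd_b: "snd b = c' - 1" by simp
  have "(c - 1 - 1) mod 2 = (c + 1 - 1) mod 2" by presburger
  then have "parity a = parity b"
    unfolding parity_def fst_ab snd_a snd_b by simp
  with par show False ..
qed

lemma seg_contains_interior_point:
  assumes "{real_of_int a .. real_of_int b} \<subseteq> seg I" "a < c" "c < b"
  shows "c - 1 \<in> I" "c \<in> I"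
proof -
  have "real_of_int c - 1/2 \<in> seg I" "real_of_int c + 1/2 \<in> seg I"
    using assms by (auto dest!: of_int_less_iff[THEN iffD2] simp: subset_iff)
  then obtain j j' where "j \<in> I" "real_of_int j \<le> real_of_int c - 1/2"
      "real_of_int c - 1/2 \<le> real_of_int j + 1"
    and "j' \<in> I" "real_of_int j' \<le> real_of_int c + 1/2"
      "real_of_int c + 1/2 \<le> real_of_int j' + 1"
    unfolding seg_def by auto
  moreover from this have "j = c - 1" "j' = c"
    by (linarith, linarith)
  ultimately show "c - 1 \<in> I" "c \<in> I" by auto
qed

lemma Psi_VerD:
  assumes "(x, y) \<in> Psi N K L (Ver, i) \<sigma>" "N > 0"
  obtains c where "x * K + K < c" "c < x * K + int K * int N - int K"
    "\<And>j. y * L < j \<Longrightarrow> j < y * L + int L * int N \<Longrightarrow>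
       stick_edge \<sigma> Ver c (j - 1) \<and> stick_edge \<sigma> Ver c j"
proof -
  from assms(1) obtain c I where st: "is_stick \<sigma> Ver c I"
    and pd: "properly_divides N Ver c I (x * K, y * L) (int K * int N) (int L * int N)"
    unfolding Psi_def by auto
  have "int K * int N div int N = int K" "int L * int N div int N = int L"
    using assms(2) by simp_all
  with pd have "x * K + K < c" "c < x * K + int K * int N - int K"
    and cover: "{real_of_int (y * L) .. real_of_int (y * L + int L * int N)} \<subseteq> seg I"
    unfolding properly_divides_def divides_def by auto
  moreover have "stick_edge \<sigma> Ver c (j - 1) \<and> stick_edge \<sigma> Ver c j"
    if "y * L < j" "j < y * L + int L * int N" for j
    using seg_contains_interior_point[OF cover that] st unfolding is_stick_def by blast
  ultimately show ?thesis using that by blast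
qed

lemma Psi_HorD:
  assumes "(x, y) \<in> Psi N K L (Hor, i) \<sigma>" "N > 0"
  obtains c where "y * L + L < c" "c < y * L + int L * int N - int L"
    "\<And>j. x * K < j \<Longrightarrow> j < x * K + int K * int N \<Longrightarrow>
       stick_edge \<sigma> Hor c (j - 1) \<and> stick_edge \<sigma> Hor c j"
proof -
  from assms(1) obtain c I where st: "is_stick \<sigma> Hor c I"
    and pd: "properly_divides N Hor c I (x * K, y * L) (int K * int N) (int L * int N)"
    unfolding Psi_def by auto
  have "int K * int N div int N = int K" "int L * int N div int N = int L"
    using assms(2) by simp_all
  with pd have "y * L + L < c" "c < y * L + int L * int N - int L"
    and cover: "{real_of_int (x * K) .. real_of_int (x * K + int K * int N)} \<subseteq> seg I"
    unfolding properly_divides_def divides_def by auto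
  moreover have "stick_edge \<sigma> Hor c (j - 1) \<and> stick_edge \<sigma> Hor c j"
    if "x * K < j" "j < x * K + int K * int N" for j
    using seg_contains_interior_point[OF cover that] st unfolding is_stick_def by blast
  ultimately show ?thesis using that by blast
qed

lemma abs_diff_mult_le:
  fixes a b k :: int
  assumes "\<bar>a - b\<bar> \<le> 1" "k \<ge> 0"
  shows "\<bar>a * k - b * k\<bar> \<le> k"
proof -
  have "\<bar>a * k - b * k\<bar> = \<bar>a - b\<bar> * k"
    using assms(2) by (simp add: abs_mult flip: left_diff_distrib)
  also have "\<dots> \<le> k" using mult_right_mono[OF assms] by simp
  finally show ?thesis .
qed

theorem lemma5p1:
  fixes N K L :: nat and \<sigma> :: config and u v :: "int \<times> int"
  assumes "N > 2" and "in_Omega \<sigma>"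
    and "u \<in> Psi_ver N K L \<sigma>" and "v \<in> Psi_hor N K L \<sigma>"
  shows "\<bar>fst u - fst v\<bar> + \<bar>snd u - snd v\<bar> \<noteq> 1"
proof
  assume adjacent: "\<bar>fst u - fst v\<bar> + \<bar>snd u - snd v\<bar> = 1"
  obtain u1 u2 v1 v2 where uv: "u = (u1, u2)" "v = (v1, v2)" by fastforce
  have N: "N > 0" using assms(1) by simp
  obtain i i' where "(u1, u2) \<in> Psi N K L (Ver, i) \<sigma>" "(v1, v2) \<in> Psi N K L (Hor, i') \<sigma>"
    using assms(3,4) unfolding Psi_ver_def Psi_hor_def uv by blast
  obtain c where c: "u1 * K + K < c" "c < u1 * K + int K * int N - int K"
    and ver: "\<And>j. u2 * L < j \<Longrightarrow> j < u2 * L + int L * int N \<Longrightarrow>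
                stick_edge \<sigma> Ver c (j - 1) \<and> stick_edge \<sigma> Ver c j"
    using Psi_VerD[OF \<open>(u1, u2) \<in> _\<close> N] by metis
  obtain c' where c': "v2 * L + L < c'" "c' < v2 * L + int L * int N - int L"
    and hor: "\<And>j. v1 * K < j \<Longrightarrow> j < v1 * K + int K * int N \<Longrightarrow>
                stick_edge \<sigma> Hor c' (j - 1) \<and> stick_edge \<sigma> Hor c' j"
    using Psi_HorD[OF \<open>(v1, v2) \<in> _\<close> N] by metis
  have "\<bar>u1 - v1\<bar> \<le> 1" "\<bar>u2 - v2\<bar> \<le> 1"
    using adjacent unfolding uv by simp_all
  then have "\<bar>u1 * K - v1 * K\<bar> \<le> K" "\<bar>u2 * L - v2 * L\<bar> \<le> L"
    by (simp_all add: abs_diff_mult_le)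
  with c c' have "u2 * L < c'" "c' < u2 * L + int L * int N"
    and "v1 * K < c" "c < v1 * K + int K * int N"
    by linarith+
  then have "stick_edge \<sigma> Ver c (c' - 1)" "stick_edge \<sigma> Hor c' (c - 1)" "stick_edge \<sigma> Hor c' c"
    using ver hor by simp_all
  then show False using no_stick_T_junction[OF assms(2)] by blast
qed

end
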